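(* Let $\alpha>0$, $\beta\in\mathbb{R}$, $\gamma>0$, and let $Q(z)=\sinh[\alpha(z-\beta)]$, so $q(z)=Q'(z)=\alpha\cosh[\alpha(z-\beta)]$, and $p(z)=1/\{1+\exp[-\sinh(\alpha(z-\beta))/\gamma]\}$. Let $H(z)=\gamma\log(1+e^{Q(z)/\gamma})$ and $\mathcal{L}_m(\hat s,s)=H(\hat s)-H(s)-(\hat s-s)H'(s)$. If $\gamma\le1/\sqrt2$, then $\mathcal{L}_m(\hat s,s)$ is convex in $\hat s\in\mathbb{R}$ for every $s\in\mathbb{R}$ (i.e. a convex selective matching loss with this scaling exists).
   Context: $H$ is the $\gamma$-regularized composite Softplus primitive, with link $H'(z)=q(z)p(z)$. *)

theory Defs
  imports "HOL-Analysis.Analysis"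
begin

definition Qf :: "real \<Rightarrow> real \<Rightarrow> real \<Rightarrow> real" where
  "Qf \<alpha> \<beta> z = sinh (\<alpha> * (z - \<beta>))"

definition qf :: "real \<Rightarrow> real \<Rightarrow> real \<Rightarrow> real" where
  "qf \<alpha> \<beta> z = \<alpha> * cosh (\<alpha> * (z - \<beta>))"

definition pf :: "real \<Rightarrow> real \<Rightarrow> real \<Rightarrow> real \<Rightarrow> real" where
  "pf \<alpha> \<beta> \<gamma> z = 1 / (1 + exp (- sinh (\<alpha> * (z - \<beta>)) / \<gamma>))"

definition Hf :: "real \<Rightarrow> real \<Rightarrow> real \<Rightarrow> real \<Rightarrow> real" where
  "Hf \<alpha> \<beta> \<gamma> z = \<gamma> * ln (1 + exp (Qf \<alpha> \<beta> z / \<gamma>))"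

definition Lm :: "real \<Rightarrow> real \<Rightarrow> real \<Rightarrow> real \<Rightarrow> real \<Rightarrow> real" where
  "Lm \<alpha> \<beta> \<gamma> shat s =
     Hf \<alpha> \<beta> \<gamma> shat - Hf \<alpha> \<beta> \<gamma> s - (shat - s) * deriv (Hf \<alpha> \<beta> \<gamma>) s"

end

theory Submission
  imports Defs
begin

text \<open>
  The loss differs from \<open>H\<close> by an affine function of \<open>shat\<close>, so it suffices that \<open>H\<close> is
  convex. With \<open>\<sigma>\<close> the logistic function, \<open>H' = q \<sigma>(Q/\<gamma>)\<close>, and \<open>cosh\<^sup>2 = 1 + sinh\<^sup>2\<close> gives
  \<open>H'' = \<alpha>\<^sup>2 p (Q + (1 + Q\<^sup>2)(1 - p)/\<gamma>)\<close>. This is clearly nonnegative where \<open>Q \<ge> 0\<close>; where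
  \<open>Q < 0\<close> we have \<open>p \<le> 1/2\<close>, and the bracket is at least \<open>(Q\<^sup>2 + 2\<gamma>Q + 1)/(2\<gamma>)\<close>, a quadratic
  with discriminant \<open>4(\<gamma>\<^sup>2 - 1) \<le> 0\<close>.
\<close>

definition logistic :: "real \<Rightarrow> real" where
  "logistic x = 1 / (1 + exp (- x))"

lemma one_plus_exp_pos: "0 < 1 + exp (x :: real)"
  using exp_gt_zero[of x] by linarith

lemma logistic_pos: "0 < logistic x"
  using one_plus_exp_pos[of "- x"] by (simp add: logistic_def)

lemma logistic_less_one: "logistic x < 1"
  using one_plus_exp_pos[of "- x"] by (simp add: logistic_def)

lemma logistic_le_half: "x \<le> 0 \<Longrightarrow> logistic x \<le> 1 / 2"
  using one_plus_exp_pos[of "- x"] by (simp add: logistic_def)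

lemma has_real_derivative_logistic:
  "(logistic has_real_derivative logistic x * (1 - logistic x)) (at x)"
proof -
  have "(logistic has_real_derivative exp (- x) / (1 + exp (- x))\<^sup>2) (at x)"
    unfolding logistic_def using one_plus_exp_pos[of "- x"]
    by (auto intro!: derivative_eq_intros simp: power2_eq_square less_le)
  moreover have "exp (- x) / (1 + exp (- x))\<^sup>2 = logistic x * (1 - logistic x)"
    using one_plus_exp_pos[of "- x"]
    by (simp add: logistic_def field_simps power2_eq_square)
  ultimately show ?thesis by simp
qed

lemma has_real_derivative_softplus:
  "((\<lambda>x. ln (1 + exp x)) has_real_derivative logistic x) (at x)"
proof -
  have "((\<lambda>x. ln (1 + exp x)) has_real_derivative exp x / (1 + exp x)) (at x)"
    using one_plus_exp_pos[of x] by (auto intro!: derivative_eq_intros)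
  moreover have "exp x / (1 + exp x) = logistic x"
    using one_plus_exp_pos[of x]
    by (simp add: logistic_def field_simps exp_minus)
  ultimately show ?thesis by simp
qed

lemma has_real_derivative_Qf: "(Qf \<alpha> \<beta> has_real_derivative qf \<alpha> \<beta> z) (at z)"
  unfolding Qf_def qf_def by (auto intro!: derivative_eq_intros)

lemma has_real_derivative_qf: "(qf \<alpha> \<beta> has_real_derivative \<alpha>\<^sup>2 * Qf \<alpha> \<beta> z) (at z)"
  unfolding Qf_def qf_def by (auto intro!: derivative_eq_intros simp: power2_eq_square)

lemma qf_squared: "(qf \<alpha> \<beta> z)\<^sup>2 = \<alpha>\<^sup>2 * (1 + (Qf \<alpha> \<beta> z)\<^sup>2)"
  unfolding Qf_def qf_def using cosh_square_eq[of "\<alpha> * (z - \<beta>)"]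
  by (simp add: power_mult_distrib)

lemma pf_eq_logistic: "pf \<alpha> \<beta> \<gamma> z = logistic (Qf \<alpha> \<beta> z / \<gamma>)"
  by (simp add: pf_def logistic_def Qf_def)

lemma has_real_derivative_scaled_softplus:
  assumes "\<gamma> \<noteq> 0" and "(Q has_real_derivative q) (at z)"
  shows "((\<lambda>z. \<gamma> * ln (1 + exp (Q z / \<gamma>))) has_real_derivative q * logistic (Q z / \<gamma>)) (at z)"
proof -
  have "((\<lambda>z. ln (1 + exp (Q z / \<gamma>))) has_real_derivative logistic (Q z / \<gamma>) * (q / \<gamma>)) (at z)"
    by (rule DERIV_chain2[OF has_real_derivative_softplus])
      (use assms in \<open>auto intro!: derivative_eq_intros\<close>)
  from DERIV_cmult[OF this, of \<gamma>] show ?thesis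
    using assms(1) by (simp add: mult.commute)
qed

lemma Hf_has_real_derivative:
  assumes "\<gamma> \<noteq> 0"
  shows "(Hf \<alpha> \<beta> \<gamma> has_real_derivative qf \<alpha> \<beta> z * pf \<alpha> \<beta> \<gamma> z) (at z)"
proof -
  have "Hf \<alpha> \<beta> \<gamma> = (\<lambda>z. \<gamma> * ln (1 + exp (Qf \<alpha> \<beta> z / \<gamma>)))"
    by (simp add: Hf_def fun_eq_iff)
  then show ?thesis
    using has_real_derivative_scaled_softplus[OF assms has_real_derivative_Qf]
    by (simp add: pf_eq_logistic)
qed

lemma link_has_real_derivative:
  assumes "\<gamma> \<noteq> 0"
  shows "((\<lambda>z. qf \<alpha> \<beta> z * pf \<alpha> \<beta> \<gamma> z) has_real_derivative
      \<alpha>\<^sup>2 * pf \<alpha> \<beta> \<gamma> z * (Qf \<alpha> \<beta> z + (1 + (Qf \<alpha> \<beta> z)\<^sup>2) * (1 - pf \<alpha> \<beta> \<gamma> z) / \<gamma>)) (at z)"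
proof -
  define \<sigma> where "\<sigma> = pf \<alpha> \<beta> \<gamma> z"
  have "(pf \<alpha> \<beta> \<gamma> has_real_derivative \<sigma> * (1 - \<sigma>) * (qf \<alpha> \<beta> z / \<gamma>)) (at z)"
    unfolding \<sigma>_def pf_eq_logistic[abs_def]
    by (rule DERIV_chain2[OF has_real_derivative_logistic])
      (use assms in \<open>auto intro!: derivative_eq_intros has_real_derivative_Qf\<close>)
  from DERIV_mult[OF has_real_derivative_qf[of \<alpha> \<beta> z] this]
  have "((\<lambda>z. qf \<alpha> \<beta> z * pf \<alpha> \<beta> \<gamma> z) has_real_derivative
      \<alpha>\<^sup>2 * Qf \<alpha> \<beta> z * \<sigma> + (qf \<alpha> \<beta> z)\<^sup>2 * \<sigma> * (1 - \<sigma>) / \<gamma>) (at z)"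
    using assms by (simp add: \<sigma>_def power2_eq_square field_simps)
  then show ?thesis
    using assms by (simp add: qf_squared \<sigma>_def field_simps)
qed

lemma square_add_linear_add_one_nonneg:
  fixes c t :: real
  assumes "\<bar>c\<bar> \<le> 1"
  shows "0 \<le> t\<^sup>2 + 2 * c * t + 1"
proof -
  have "c\<^sup>2 \<le> 1"
    using assms by (simp add: abs_square_le_1)
  then have "0 \<le> (t + c)\<^sup>2 + (1 - c\<^sup>2)"
    by simp
  then show ?thesis
    by (simp add: power2_eq_square algebra_simps)
qed

lemma Hf_curvature_nonneg:
  assumes "0 < \<gamma>" and "\<gamma> \<le> 1"
  shows "0 \<le> \<alpha>\<^sup>2 * pf \<alpha> \<beta> \<gamma> z * (Qf \<alpha> \<beta> z + (1 + (Qf \<alpha> \<beta> z)\<^sup>2) * (1 - pf \<alpha> \<beta> \<gamma> z) / \<gamma>)"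
proof -
  define t where "t = Qf \<alpha> \<beta> z"
  define \<sigma> where "\<sigma> = pf \<alpha> \<beta> \<gamma> z"
  have \<sigma>_eq: "\<sigma> = logistic (t / \<gamma>)"
    by (simp add: \<sigma>_def t_def pf_eq_logistic)
  have "0 \<le> t + (1 + t\<^sup>2) * (1 - \<sigma>) / \<gamma>"
  proof (cases "0 \<le> t")
    case True
    moreover have "\<sigma> < 1"
      by (simp add: \<sigma>_eq logistic_less_one)
    ultimately show ?thesis
      using assms(1) by simp
  next
    case False
    then have "t / \<gamma> \<le> 0"
      using assms(1) by (simp add: divide_nonpos_pos)
    then have "\<sigma> \<le> 1 / 2"
      unfolding \<sigma>_eq by (rule logistic_le_half)
    then have "(1 + t\<^sup>2) * (1 / 2) / \<gamma> \<le> (1 + t\<^sup>2) * (1 - \<sigma>) / \<gamma>"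
      using assms(1) by (intro divide_right_mono mult_left_mono) auto
    moreover have "0 \<le> (t\<^sup>2 + 2 * \<gamma> * t + 1) / (2 * \<gamma>)"
      using square_add_linear_add_one_nonneg[of \<gamma> t] assms by simp
    then have "0 \<le> t + (1 + t\<^sup>2) * (1 / 2) / \<gamma>"
      using assms(1) by (simp add: field_simps)
    ultimately show ?thesis
      by linarith
  qed
  moreover have "0 < \<sigma>"
    by (simp add: \<sigma>_eq logistic_pos)
  ultimately show ?thesis
    by (simp flip: t_def \<sigma>_def)
qed

lemma convex_on_Hf:
  assumes "0 < \<gamma>" and "\<gamma> \<le> 1"
  shows "convex_on UNIV (Hf \<alpha> \<beta> \<gamma>)"
  using assms
  by (intro f''_ge0_imp_convex[OF _ Hf_has_real_derivative link_has_real_derivative]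
      Hf_curvature_nonneg) auto

lemma convex_on_diff_affine:
  fixes f :: "real \<Rightarrow> real"
  assumes "convex_on S f"
  shows "convex_on S (\<lambda>x. f x - a - (x - s) * d)"
proof (rule convex_onI)
  show "convex S"
    using assms by (rule convex_on_imp_convex)
  fix t x y :: real
  assume "0 < t" "t < 1" "x \<in> S" "y \<in> S"
  then have "f ((1 - t) *\<^sub>R x + t *\<^sub>R y) \<le> (1 - t) * f x + t * f y"
    by (intro convex_onD[OF assms]) auto
  then show "f ((1 - t) *\<^sub>R x + t *\<^sub>R y) - a - ((1 - t) *\<^sub>R x + t *\<^sub>R y - s) * d
      \<le> (1 - t) * (f x - a - (x - s) * d) + t * (f y - a - (y - s) * d)"
    by (simp add: algebra_simps)
qed

theorem corollaryG4:
  fixes \<alpha> \<beta> \<gamma> :: real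
  assumes "\<alpha> > 0" and "\<gamma> > 0" and "\<gamma> \<le> 1 / sqrt 2"
  shows "\<forall>s. convex_on UNIV (\<lambda>shat. Lm \<alpha> \<beta> \<gamma> shat s)"
proof
  fix s
  have "\<gamma> \<le> 1"
    using assms(3) order_trans[of \<gamma> "1 / sqrt 2" 1] by simp
  with assms(2) have "convex_on UNIV (Hf \<alpha> \<beta> \<gamma>)"
    by (rule convex_on_Hf)
  then show "convex_on UNIV (\<lambda>shat. Lm \<alpha> \<beta> \<gamma> shat s)"
    unfolding Lm_def by (rule convex_on_diff_affine)
qed

end
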